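(* Let $n\ge1$ and $w\in\mathfrak S_n\subset\widehat{\mathfrak S}_n$. Let $\gamma\in\widehat{\mathfrak S}_n$ be translation by $-\rho=(0,-1,\dots,1-n)$. Then there are bijections \[ \alpha:\operatorname{Inv}(w)\to\operatorname{Inv}_0(\gamma^{-1}w\gamma),\quad (i,j)\mapsto(i,\,j+(j-i)n), \] \[ \beta:\operatorname{Inv}(w)\to\operatorname{Inv}_\infty(\gamma^{-1}w\gamma),\quad (i,j)\mapsto(i,\,j+(j-i+1)n). \]
   Context: $\widehat{\mathfrak S}_n$ (extended affine symmetric group) is the group of bijections $w:\mathbb Z\to\mathbb Z$ with $w(i+n)=w(i)+n$ for all $i$, under composition; $\mathfrak S_n$ embeds as those $w$ permuting $\{1,\dots,n\}$. For $\beta\in\mathbb Z^n$, translation by $\beta$ is $i\mapsto i+n\beta_{i\bmod n}$; thus $\gamma(i)=i+n(1-i)$ for $1\le i\le n$. For an affine permutation $u$, $\operatorname{Inv}(u)=\{(i,j)\in\{1,\dots,n\}\times\mathbb Z: i<j,\ u(i)>u(j)\}$. An inversion $(i,j)$ is vanishing if $j-i\equiv0\bmod(n+1)$ and singular if $j-i\equiv n\bmod(n+1)$; $\operatorname{Inv}_0(u)$ and $\operatorname{Inv}_\infty(u)$ denote the sets of vanishing and singular inversions. *)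

theory Defs
  imports Main
begin

text \<open>Extended affine permutations of period n, as maps int to int.\<close>
definition affine_perm :: "int \<Rightarrow> (int \<Rightarrow> int) \<Rightarrow> bool" where
  "affine_perm n w \<longleftrightarrow> bij w \<and> (\<forall>i. w (i + n) = w i + n)"

definition fin_perm :: "int \<Rightarrow> (int \<Rightarrow> int) \<Rightarrow> bool" where
  "fin_perm n w \<longleftrightarrow> affine_perm n w \<and> w ` {1..n} = {1..n}"

definition res :: "int \<Rightarrow> int \<Rightarrow> int" where
  "res n i = (i - 1) mod n + 1"

definition translation :: "int \<Rightarrow> (int \<Rightarrow> int) \<Rightarrow> int \<Rightarrow> int" where
  "translation n b i = i + n * b (res n i)"

text \<open>gamma = translation by -rho = (0,-1,...,1-n), i.e. beta_k = 1 - k.\<close>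
definition gamma :: "int \<Rightarrow> int \<Rightarrow> int" where
  "gamma n = translation n (\<lambda>k. 1 - k)"

definition Inv :: "int \<Rightarrow> (int \<Rightarrow> int) \<Rightarrow> (int \<times> int) set" where
  "Inv n u = {(i, j). 1 \<le> i \<and> i \<le> n \<and> i < j \<and> u i > u j}"

definition Inv0 :: "int \<Rightarrow> (int \<Rightarrow> int) \<Rightarrow> (int \<times> int) set" where
  "Inv0 n u = {(i, j). (i, j) \<in> Inv n u \<and> (j - i) mod (n + 1) = 0}"

definition Inv_inf :: "int \<Rightarrow> (int \<Rightarrow> int) \<Rightarrow> (int \<times> int) set" where
  "Inv_inf n u = {(i, j). (i, j) \<in> Inv n u \<and> (j - i) mod (n + 1) = n mod (n + 1)}"

end

theory Submission
  imports Defs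
begin

text \<open>
  Writing x = r + k n with r in {1..n}, gamma x = r + (k + 1 - r) n; since w preserves {1..n}
  and commutes with shifts by n, this yields the closed form gamma^(-1) w gamma x = (n + 1) w x - n x.
  For c in {0, 1} and j' = j + (j - i + c) n, both u i - u j' and j' - i are then a multiple
  of n + 1 plus an offset of absolute value at most n, so (i, j') is an inversion of
  gamma^(-1) w gamma exactly when (i, j) is one of w. The pairs (i, j') obtained for c = 0 and
  c = 1 are exactly those with j' - i congruent to 0 resp. n modulo n + 1.
\<close>

lemma res_add_mult: "res n (a + k * n) = res n a"
  unfolding res_def by (metis diff_add_eq mod_mult_self1)

lemma res_eq_self: "1 \<le> a \<Longrightarrow> a \<le> n \<Longrightarrow> res n a = a"
  unfolding res_def by simp

lemma res_decomp:
  fixes n :: int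
  assumes "n \<ge> 1"
  obtains r k where "x = r + k * n" "r \<in> {1..n}"
proof
  show "x = res n x + ((x - 1) div n) * n"
    unfolding res_def using div_mult_mod_eq[of "x - 1" n] by linarith
  have "0 \<le> (x - 1) mod n" and "(x - 1) mod n < n" using assms by simp_all
  then show "res n x \<in> {1..n}" unfolding res_def atLeastAtMost_iff by linarith
qed

lemma affine_perm_add_mult:
  assumes "affine_perm n w"
  shows "w (x + k * n) = w x + k * n"
proof (induction k rule: int_induct[where k = 0])
  case base
  show ?case by simp
next
  case (step1 k)
  have "w (x + (k + 1) * n) = w ((x + k * n) + n)" by (simp add: algebra_simps)
  also have "\<dots> = w (x + k * n) + n" using assms unfolding affine_perm_def by blast
  finally show ?case using step1 by (simp add: algebra_simps)
next
  case (step2 k)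
  have "w (x + k * n) = w ((x + (k - 1) * n) + n)" by (simp add: algebra_simps)
  also have "\<dots> = w (x + (k - 1) * n) + n" using assms unfolding affine_perm_def by blast
  finally show ?case using step2 by (simp add: algebra_simps)
qed

lemma gamma_add_mult:
  assumes "r \<in> {1..n}"
  shows "gamma n (r + k * n) = r + (k + 1 - r) * n"
  using assms unfolding gamma_def translation_def
  by (simp add: res_add_mult res_eq_self algebra_simps)

lemma inj_gamma: "inj (gamma n)"
proof (rule injI)
  fix x y
  assume eq: "gamma n x = gamma n y"
  have res_gamma: "res n (gamma n z) = res n z" for z
    unfolding gamma_def translation_def by (metis mult.commute res_add_mult)
  from eq have "res n x = res n y" by (metis res_gamma)
  with eq show "x = y" unfolding gamma_def translation_def by simp
qed

lemma gamma_conj_fin_perm: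
  assumes "n \<ge> 1" and "fin_perm n w"
  shows "(inv (gamma n) \<circ> w \<circ> gamma n) x = (n + 1) * w x - n * x"
proof -
  have w: "affine_perm n w" using assms(2) unfolding fin_perm_def by blast
  obtain r k where x: "x = r + k * n" and r: "r \<in> {1..n}"
    using res_decomp[OF assms(1)] .
  have wr: "w r \<in> {1..n}" using assms(2) r unfolding fin_perm_def by blast
  have "(n + 1) * w x - n * x = w r + (w r + k - r) * n"
    unfolding x affine_perm_add_mult[OF w] by (simp add: algebra_simps)
  then have "gamma n ((n + 1) * w x - n * x) = w r + (k + 1 - r) * n"
    using gamma_add_mult[OF wr] by simp
  also have "\<dots> = w (gamma n x)"
    unfolding x gamma_add_mult[OF r] affine_perm_add_mult[OF w] ..
  finally show ?thesis
    by (metis comp_apply inj_gamma inv_f_f)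
qed

definition shift_pair :: "int \<Rightarrow> int \<Rightarrow> int \<times> int \<Rightarrow> int \<times> int" where
  "shift_pair n c = (\<lambda>(i, j). (i, j + (j - i + c) * n))"

lemma inj_shift_pair:
  assumes "n \<ge> 0"
  shows "inj (shift_pair n c)"
proof (rule injI)
  fix p q
  assume "shift_pair n c p = shift_pair n c q"
  then have "fst p = fst q" and "(snd p - snd q) * (n + 1) = 0"
    unfolding shift_pair_def by (auto split: prod.splits simp: algebra_simps)
  with assms show "p = q" by (simp add: prod_eq_iff)
qed

lemma range_shift_pair:
  assumes "n \<ge> 0"
  shows "range (shift_pair n c) = {(i, j'). (j' - i) mod (n + 1) = (c * n) mod (n + 1)}"
proof (intro set_eqI iffI)
  fix p
  assume "p \<in> range (shift_pair n c)"
  then obtain i j where p: "p = (i, j + (j - i + c) * n)"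
    unfolding shift_pair_def by (auto split: prod.splits)
  have "j + (j - i + c) * n - i = c * n + (j - i) * (n + 1)" by (simp add: algebra_simps)
  then show "p \<in> {(i, j'). (j' - i) mod (n + 1) = (c * n) mod (n + 1)}"
    unfolding p by simp
next
  fix p
  assume "p \<in> {(i, j'). (j' - i) mod (n + 1) = (c * n) mod (n + 1)}"
  then obtain i j' where p: "p = (i, j')" and "(j' - i) mod (n + 1) = (c * n) mod (n + 1)"
    by blast
  then have "(n + 1) dvd (j' - i - c * n)" by (simp add: mod_eq_dvd_iff)
  then obtain m where m: "j' - i - c * n = (n + 1) * m" by blast
  have "shift_pair n c (i, i + m) = p"
    unfolding shift_pair_def p using m by (simp add: algebra_simps)
  then show "p \<in> range (shift_pair n c)" by (metis rangeI)
qed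

lemma mult_succ_offset_pos_iff:
  fixes d e n :: int
  assumes "0 \<le> e" and "e \<le> n"
  shows "0 < d * (n + 1) + e \<longleftrightarrow> 0 < d \<or> (d = 0 \<and> 0 < e)"
    and "0 < d * (n + 1) - e \<longleftrightarrow> 0 < d"
proof -
  consider "0 < d" "d * (n + 1) \<ge> n + 1" | "d = 0" | "d < 0" "d * (n + 1) \<le> - (n + 1)"
    using assms mult_right_mono[of 1 d "n + 1"] mult_right_mono[of d "-1" "n + 1"]
    by (cases "0 < d"; cases "d = 0") auto
  then have "(0 < d * (n + 1) + e \<longleftrightarrow> 0 < d \<or> (d = 0 \<and> 0 < e))
    \<and> (0 < d * (n + 1) - e \<longleftrightarrow> 0 < d)"
    by cases (use assms in arith)+
  then show "0 < d * (n + 1) + e \<longleftrightarrow> 0 < d \<or> (d = 0 \<and> 0 < e)"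
    and "0 < d * (n + 1) - e \<longleftrightarrow> 0 < d"
    by blast+
qed

lemma shift_pair_Inv_iff:
  assumes n: "n \<ge> 1" and c: "c \<in> {0, 1}" and w: "affine_perm n w"
    and u: "\<And>x. u x = (n + 1) * w x - n * x"
  shows "shift_pair n c (i, j) \<in> Inv n u \<longleftrightarrow> (i, j) \<in> Inv n w"
proof -
  define j' where "j' = j + (j - i + c) * n"
  have offset: "0 \<le> c * n" "c * n \<le> n" using n c by auto
  have "u i - u j' = (w i - w j) * (n + 1) - c * n"
    unfolding j'_def u affine_perm_add_mult[OF w] by (simp add: algebra_simps)
  then have "u j' < u i \<longleftrightarrow> w j < w i"
    using mult_succ_offset_pos_iff(2)[OF offset, of "w i - w j"] by linarith
  moreover have "j' - i = (j - i) * (n + 1) + c * n"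
    unfolding j'_def by (simp add: algebra_simps)
  then have "i < j' \<longleftrightarrow> i < j \<or> (i = j \<and> 0 < c * n)"
    using mult_succ_offset_pos_iff(1)[OF offset, of "j - i"] by linarith
  ultimately show ?thesis
    unfolding Inv_def shift_pair_def j'_def by auto
qed

lemma bij_betw_shift_pair_Inv:
  assumes "n \<ge> 1" and "c \<in> {0, 1}" and "affine_perm n w"
    and "\<And>x. u x = (n + 1) * w x - n * x"
  shows "bij_betw (shift_pair n c) (Inv n w) (Inv n u \<inter> range (shift_pair n c))"
proof -
  note iff = shift_pair_Inv_iff[OF assms]
  have "shift_pair n c ` Inv n w = Inv n u \<inter> range (shift_pair n c)"
    using iff by (fastforce simp: image_iff)
  then show ?thesis
    using inj_on_subset[OF inj_shift_pair subset_UNIV] assms(1) by (simp add: bij_betw_def)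
qed

theorem lemma6p9:
  fixes n :: int and w :: "int \<Rightarrow> int"
  assumes "n \<ge> 1" and "fin_perm n w"
  shows "bij_betw (\<lambda>(i, j). (i, j + (j - i) * n)) (Inv n w)
           (Inv0 n (inv (gamma n) \<circ> w \<circ> gamma n))
       \<and> bij_betw (\<lambda>(i, j). (i, j + (j - i + 1) * n)) (Inv n w)
           (Inv_inf n (inv (gamma n) \<circ> w \<circ> gamma n))"
proof -
  define u where "u = inv (gamma n) \<circ> w \<circ> gamma n"
  have w: "affine_perm n w" using assms(2) unfolding fin_perm_def by blast
  have u: "u x = (n + 1) * w x - n * x" for x
    unfolding u_def using gamma_conj_fin_perm[OF assms] .
  have "Inv0 n u = Inv n u \<inter> range (shift_pair n 0)"
    and "Inv_inf n u = Inv n u \<inter> range (shift_pair n 1)"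
    unfolding Inv0_def Inv_inf_def using assms(1)
    by (auto simp: range_shift_pair)
  moreover have "(\<lambda>(i, j). (i, j + (j - i) * n)) = shift_pair n 0"
    and "(\<lambda>(i, j). (i, j + (j - i + 1) * n)) = shift_pair n 1"
    unfolding shift_pair_def by simp_all
  ultimately show ?thesis
    using bij_betw_shift_pair_Inv[OF assms(1) _ w u] unfolding u_def[symmetric] by simp
qed

end
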